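(* Let $\mu$ be a joint distribution of a triple $(X,A,Y)$ with $X\in\mathcal{X}\subseteq\mathbb{R}^d$, $A\in\{0,1\}$ with $\Pr(A=0),\Pr(A=1)>0$, and $Y\in[-1,1]$. Let $h:\mathcal{X}\to\mathbb{R}$ be measurable and $\widehat{Y}=h(X)$. If $\widehat{Y}$ is statistically independent of $A$, then for every $p\geq1$, $$\varepsilon_{p,\mu}(\widehat{Y})\geq H_{0\text{-}1}(A)\cdot W_p(Y_\sharp\mu_0,Y_\sharp\mu_1).$$
   Context: For $a\in\{0,1\}$, $\mu_a$ is the conditional distribution of $(X,Y)$ given $A=a$. For a distribution $\nu$, $\varepsilon_{p,\nu}(\widehat{Y}):=\left(\mathbb{E}_\nu[|\widehat{Y}-Y|^p]\right)^{1/p}$ (for $\nu=\mu$ this is the error over the whole population). $H_{0\text{-}1}(A):=1-\max_{a\in\{0,1\}}\Pr(A=a)$ is the zero-one entropy of $A$. $Y_\sharp\mu_a$ is the distribution of $Y$ under $\mu_a$ and $W_p$ is the $p$-Wasserstein distance on $\mathbb{R}$. *)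

theory Defs
  imports "HOL-Probability.Probability"
begin

definition root_enn :: "real \<Rightarrow> ennreal \<Rightarrow> ereal" where
  "root_enn p I = (if I = \<infinity> then \<infinity> else ereal (enn2real I powr (1 / p)))"

definition lp_error :: "real \<Rightarrow> 'a measure \<Rightarrow> ('a \<Rightarrow> real) \<Rightarrow> ('a \<Rightarrow> real) \<Rightarrow> ereal" where
  "lp_error p M Yhat Y = root_enn p (\<integral>\<^sup>+ \<omega>. ennreal (\<bar>Yhat \<omega> - Y \<omega>\<bar> powr p) \<partial>M)"

definition couplings :: "real measure \<Rightarrow> real measure \<Rightarrow> (real \<times> real) measure set" where
  "couplings \<mu> \<nu> = {\<pi>. prob_space \<pi> \<and> sets \<pi> = sets (borel \<Otimes>\<^sub>M borel) \<and>
      distr \<pi> borel fst = \<mu> \<and> distr \<pi> borel snd = \<nu>}"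

definition wasserstein :: "real \<Rightarrow> real measure \<Rightarrow> real measure \<Rightarrow> ereal" where
  "wasserstein p \<mu> \<nu> = root_enn p
     (INF \<pi>\<in>couplings \<mu> \<nu>. \<integral>\<^sup>+ z. ennreal (\<bar>fst z - snd z\<bar> powr p) \<partial>\<pi>)"

text \<open>Conditional distribution of Y given A = a (the push-forward Y_# mu_a).\<close>
definition cond_distr :: "'a measure \<Rightarrow> ('a \<Rightarrow> 'b) \<Rightarrow> 'b \<Rightarrow> ('a \<Rightarrow> real) \<Rightarrow> real measure" where
  "cond_distr M A a Y = distr (uniform_measure M {\<omega>\<in>space M. A \<omega> = a}) borel Y"

definition H01 :: "'a measure \<Rightarrow> ('a \<Rightarrow> real) \<Rightarrow> real" where
  "H01 M A = 1 - max (measure M {\<omega>\<in>space M. A \<omega> = 0}) (measure M {\<omega>\<in>space M. A \<omega> = 1})"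

end

theory Submission
  imports Defs
begin

text \<open>
  Discretise the prediction to \<open>g = \<lfloor>Yhat / t\<rfloor>\<close>. Being a function of Yhat, g is
  independent of A, so the laws of the sample conditioned on A = 0 and on A = 1 can be glued along g:
  draw the two points conditionally independently given g. Paired points then have predictions
  within t of each other, so by convexity |Y - Y'|^p is at most 2^(p-1) (|Yhat - Y|^p + |Yhat' - Y'|^p)
  up to errors that vanish with t. Hence W_p^p \<le> 2^(p-1) (\<epsilon>_0^p + \<epsilon>_1^p) for the conditional
  errors \<epsilon>_a, whereas \<epsilon>^p = Pr(A=0) \<epsilon>_0^p + Pr(A=1) \<epsilon>_1^p \<ge> H (\<epsilon>_0^p + \<epsilon>_1^p),
  and H \<ge> 2^(p-1) H^p because H \<le> 1/2.
\<close>

section \<open>Elementary inequalities\<close>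

lemma one_le_powr_of_le_one:
  fixes x e :: real
  assumes "0 < x" "x \<le> 1" "e \<le> 0"
  shows "1 \<le> x powr e"
proof -
  have "x powr (- e) \<le> 1" using assms by (intro powr_le1) auto
  then show ?thesis using assms by (simp add: powr_minus field_simps)
qed

lemma add_powr_le_weighted:
  fixes a b l p :: real
  assumes "0 \<le> a" "0 \<le> b" "0 < l" "l < 1" "1 \<le> p"
  shows "(a + b) powr p \<le> l powr (1 - p) * a powr p + (1 - l) powr (1 - p) * b powr p"
proof (cases "a = 0 \<or> b = 0")
  case True
  have "1 \<le> l powr (1 - p)" "1 \<le> (1 - l) powr (1 - p)"
    using assms by (auto intro: one_le_powr_of_le_one)
  with True assms show ?thesis
    using mult_right_mono[of 1 _ "a powr p"] mult_right_mono[of 1 _ "b powr p"] by auto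
next
  case False
  with assms have "0 < a" "0 < b" by auto
  have "(l * (a / l) + (1 - l) * (b / (1 - l))) powr p
      \<le> l * (a / l) powr p + (1 - l) * (b / (1 - l)) powr p"
    using convex_onD[OF powr_convex[OF \<open>1 \<le> p\<close>], of "1 - l" "a / l" "b / (1 - l)"] \<open>0 < a\<close> \<open>0 < b\<close> assms
    by simp
  moreover have "l * (a / l) powr p = l powr (1 - p) * a powr p"
    "(1 - l) * (b / (1 - l)) powr p = (1 - l) powr (1 - p) * b powr p"
    using assms \<open>0 < a\<close> \<open>0 < b\<close> by (simp_all add: powr_divide powr_diff)
  ultimately show ?thesis using assms by simp
qed

lemma add_powr_le_two_powr:
  fixes a b p :: real
  assumes "0 \<le> a" "0 \<le> b" "1 \<le> p"
  shows "(a + b) powr p \<le> 2 powr (p - 1) * (a powr p + b powr p)"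
proof -
  have "(1 / 2 :: real) powr (1 - p) = 2 powr (p - 1)"
    by (simp add: powr_divide powr_minus_divide[symmetric])
  then show ?thesis
    using add_powr_le_weighted[OF assms(1,2), of "1 / 2" p] assms by (simp add: distrib_left)
qed

lemma powr_dist_le_via_predictions:
  fixes y y' u u' t p :: real
  assumes "\<bar>u - u'\<bar> \<le> t" "0 < t" "t < 1" "1 \<le> p"
  shows "\<bar>y - y'\<bar> powr p
    \<le> (1 - t) powr (1 - p) * 2 powr (p - 1) * (\<bar>u - y\<bar> powr p + \<bar>u' - y'\<bar> powr p) + t"
proof -
  have "\<bar>y - y'\<bar> powr p \<le> ((\<bar>u - y\<bar> + \<bar>u' - y'\<bar>) + t) powr p"
    using assms by (intro powr_mono2) auto
  also have "\<dots> \<le> (1 - t) powr (1 - p) * (\<bar>u - y\<bar> + \<bar>u' - y'\<bar>) powr p + t powr (1 - p) * t powr p"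
    using add_powr_le_weighted[of _ t "1 - t" p] assms by simp
  also have "t powr (1 - p) * t powr p = t"
    using assms by (simp add: powr_add[symmetric])
  also have "(1 - t) powr (1 - p) * (\<bar>u - y\<bar> + \<bar>u' - y'\<bar>) powr p
      \<le> (1 - t) powr (1 - p) * (2 powr (p - 1) * (\<bar>u - y\<bar> powr p + \<bar>u' - y'\<bar> powr p))"
    using assms by (intro mult_left_mono add_powr_le_two_powr) auto
  finally show ?thesis by (simp add: mult.assoc)
qed

lemma two_powr_mult_powr_le:
  fixes c p :: real
  assumes "0 \<le> c" "2 * c \<le> 1" "1 \<le> p"
  shows "2 powr (p - 1) * c powr p \<le> c"
proof -
  have "2 powr (p - 1) * c powr p = c * (2 * c) powr (p - 1)"
    using assms by (cases "c = 0") (simp_all add: powr_mult powr_diff field_simps)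
  also have "\<dots> \<le> c * 1"
    using assms by (intro mult_left_mono powr_le1) auto
  finally show ?thesis by simp
qed

lemma abs_diff_le_of_floor_divide_eq:
  fixes u v t :: real
  assumes "0 < t" "\<lfloor>u / t\<rfloor> = \<lfloor>v / t\<rfloor>"
  shows "\<bar>u - v\<bar> \<le> t"
proof -
  have "\<bar>u / t - v / t\<bar> < 1"
    using assms(2) floor_correct[of "u / t"] floor_correct[of "v / t"] by linarith
  then show ?thesis
    using assms(1) by (simp add: diff_divide_distrib[symmetric] field_simps)
qed

definition transport_cost :: "real \<Rightarrow> real measure \<Rightarrow> real measure \<Rightarrow> ennreal" where
  "transport_cost p \<mu> \<nu> = (INF \<pi>\<in>couplings \<mu> \<nu>. \<integral>\<^sup>+z. ennreal (\<bar>fst z - snd z\<bar> powr p) \<partial>\<pi>)"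

lemma wasserstein_eq_root_transport_cost: "wasserstein p \<mu> \<nu> = root_enn p (transport_cost p \<mu> \<nu>)"
  by (simp add: wasserstein_def transport_cost_def)

lemma root_enn_mono:
  assumes "0 < p" "I \<le> J"
  shows "root_enn p I \<le> root_enn p J"
  using assms by (auto simp: root_enn_def top_unique less_top intro!: powr_mono2 enn2real_mono)

lemma root_enn_ennreal_powr_mult:
  assumes "0 < p" "0 \<le> c"
  shows "root_enn p (ennreal (c powr p) * I) = ereal c * root_enn p I"
proof (cases "I = \<infinity> \<or> c = 0")
  case True
  with assms show ?thesis
    by (auto simp: root_enn_def ennreal_mult_top)
next
  case False
  with assms have "ennreal (c powr p) * I \<noteq> \<infinity>"
    by (simp add: ennreal_mult_eq_top_iff)
  with False assms show ?thesis
    by (simp add: root_enn_def enn2real_mult powr_mult powr_powr)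
qed

lemma distr_pair_in_couplings:
  assumes "prob_space \<rho>" "sets \<rho> = sets (N \<Otimes>\<^sub>M N)" and [measurable]: "Y \<in> borel_measurable N"
  shows "distr \<rho> borel (\<lambda>xx. (Y (fst xx), Y (snd xx)))
    \<in> couplings (distr (distr \<rho> N fst) borel Y) (distr (distr \<rho> N snd) borel Y)"
proof -
  have [measurable_cong]: "sets \<rho> = sets (N \<Otimes>\<^sub>M N)" by fact
  have [measurable]: "(\<lambda>xx. (Y (fst xx), Y (snd xx))) \<in> measurable \<rho> borel"
    unfolding borel_prod[symmetric] by measurable
  have [measurable]: "fst \<in> measurable (borel :: (real \<times> real) measure) borel"
    "snd \<in> measurable (borel :: (real \<times> real) measure) borel"
    unfolding borel_prod[symmetric] by measurable
  have "distr (distr \<rho> borel (\<lambda>xx. (Y (fst xx), Y (snd xx)))) borel fst = distr (distr \<rho> N fst) borel Y"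
    "distr (distr \<rho> borel (\<lambda>xx. (Y (fst xx), Y (snd xx)))) borel snd = distr (distr \<rho> N snd) borel Y"
    by (simp_all add: distr_distr comp_def)
  moreover have "prob_space (distr \<rho> borel (\<lambda>xx. (Y (fst xx), Y (snd xx))))"
    by (intro prob_space.prob_space_distr assms) measurable
  moreover have "sets (borel :: (real \<times> real) measure) = sets (borel \<Otimes>\<^sub>M borel)"
    by (metis borel_prod)
  ultimately show ?thesis
    by (simp add: couplings_def)
qed

section \<open>Gluing two conditional laws along a discrete variable\<close>

text \<open>
  Two draws, from M conditioned on S and on T, that are conditionally independent given g. When g
  is independent of S and of T, the density with respect to the product of the two conditional
  laws is 1 / Pr(g = z) on each block {g x = g x' = z}; blocks with Pr(g = z) = 0 form a null set,
  on which the junk value 1 / 0 = 0 is harmless.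
\<close>
definition glue_density :: "'a measure \<Rightarrow> ('a \<Rightarrow> 'b) \<Rightarrow> 'a \<times> 'a \<Rightarrow> ennreal" where
  "glue_density M g = (\<lambda>(x, x'). if g x = g x' then ennreal (1 / measure M {y\<in>space M. g y = g x}) else 0)"

definition glued_measure :: "'a measure \<Rightarrow> ('a \<Rightarrow> 'b) \<Rightarrow> 'a set \<Rightarrow> 'a set \<Rightarrow> ('a \<times> 'a) measure" where
  "glued_measure M g S T = density (uniform_measure M S \<Otimes>\<^sub>M uniform_measure M T) (glue_density M g)"

lemma glue_density_commute: "glue_density M g (x, x') = glue_density M g (x', x)"
  by (simp add: glue_density_def)

context prob_space
begin

lemma AE_prob_level_set_nonzero:
  fixes g :: "'a \<Rightarrow> 'b::countable"
  assumes [measurable]: "g \<in> measurable M (count_space UNIV)"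
  shows "AE x in M. prob {y\<in>space M. g y = g x} \<noteq> 0"
proof -
  have "AE x in M. g x = z \<longrightarrow> prob {y\<in>space M. g y = z} \<noteq> 0" for z
  proof (cases "prob {y\<in>space M. g y = z} = 0")
    case True
    then have "{y\<in>space M. g y = z} \<in> null_sets M"
      by (simp add: emeasure_eq_measure null_sets_def)
    from AE_not_in[OF this] AE_space show ?thesis by eventually_elim auto
  qed simp
  then have "AE x in M. \<forall>z. g x = z \<longrightarrow> prob {y\<in>space M. g y = z} \<noteq> 0"
    by (subst AE_all_countable) auto
  then show ?thesis by eventually_elim auto
qed

lemma borel_measurable_glue_density [measurable]:
  fixes g :: "'a \<Rightarrow> 'b::countable"
  assumes [measurable]: "g \<in> measurable M (count_space UNIV)"
  shows "glue_density M g \<in> borel_measurable (M \<Otimes>\<^sub>M M)"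
  unfolding glue_density_def by measurable

lemma nn_integral_glue_density_section:
  fixes g :: "'a \<Rightarrow> 'b::countable"
  assumes [measurable]: "g \<in> measurable M (count_space UNIV)" "S \<in> events"
    and "prob S > 0"
    and indep: "\<And>z. prob ({x\<in>space M. g x = z} \<inter> S) = prob {x\<in>space M. g x = z} * prob S"
  shows "AE x in M. (\<integral>\<^sup>+x'. glue_density M g (x, x') \<partial>uniform_measure M S) = 1"
  using AE_prob_level_set_nonzero[OF assms(1)] AE_space
proof eventually_elim
  case (elim x)
  define G where "G = {y\<in>space M. g y = g x}"
  have [measurable]: "G \<in> events" unfolding G_def by measurable
  have "emeasure (uniform_measure M S) G = ennreal (prob G * prob S) / ennreal (prob S)"
    using indep[of "g x"] by (simp add: emeasure_eq_measure G_def Int_commute)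
  also have "\<dots> = ennreal (prob G)"
    using \<open>prob S > 0\<close> by (simp add: divide_ennreal)
  finally have emeasure_G: "emeasure (uniform_measure M S) G = ennreal (prob G)" .
  have "(\<integral>\<^sup>+x'. glue_density M g (x, x') \<partial>uniform_measure M S)
      = (\<integral>\<^sup>+x'. ennreal (1 / prob G) * indicator G x' \<partial>uniform_measure M S)"
    by (intro nn_integral_cong) (auto simp: glue_density_def G_def split: split_indicator)
  also have "\<dots> = ennreal (1 / prob G) * ennreal (prob G)"
    by (simp add: nn_integral_cmult_indicator emeasure_G)
  also have "\<dots> = 1"
    using elim by (simp add: G_def ennreal_mult''[symmetric])
  finally show ?case .
qed

end

locale gluing = prob_space +
  fixes g :: "'a \<Rightarrow> 'b::countable" and S T :: "'a set"
  assumes measurable_g [measurable]: "g \<in> measurable M (count_space UNIV)"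
    and events_S_T [measurable]: "S \<in> events" "T \<in> events"
    and prob_S_T_pos: "prob S > 0" "prob T > 0"
    and indep_S: "\<And>z. prob ({x\<in>space M. g x = z} \<inter> S) = prob {x\<in>space M. g x = z} * prob S"
    and indep_T: "\<And>z. prob ({x\<in>space M. g x = z} \<inter> T) = prob {x\<in>space M. g x = z} * prob T"
begin

sublocale S: prob_space "uniform_measure M S"
  using prob_S_T_pos by (intro prob_space_uniform_measure) (auto simp: emeasure_eq_measure)

sublocale T: prob_space "uniform_measure M T"
  using prob_S_T_pos by (intro prob_space_uniform_measure) (auto simp: emeasure_eq_measure)

sublocale S_T: pair_sigma_finite "uniform_measure M S" "uniform_measure M T" ..

lemma sets_pair_uniform_measure: "sets (uniform_measure M S \<Otimes>\<^sub>M uniform_measure M T) = sets (M \<Otimes>\<^sub>M M)"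
  by (intro sets_pair_measure_cong) simp_all

lemma borel_measurable_pair_uniform_measure:
  "f \<in> borel_measurable (M \<Otimes>\<^sub>M M) \<Longrightarrow> f \<in> borel_measurable (uniform_measure M S \<Otimes>\<^sub>M uniform_measure M T)"
  by (simp add: measurable_cong_sets[OF sets_pair_uniform_measure refl])

lemma nn_integral_glued_measure_fst:
  assumes [measurable]: "\<phi> \<in> borel_measurable M"
  shows "(\<integral>\<^sup>+xx. \<phi> (fst xx) \<partial>glued_measure M g S T) = (\<integral>\<^sup>+x. \<phi> x \<partial>uniform_measure M S)"
proof -
  have "(\<integral>\<^sup>+xx. \<phi> (fst xx) \<partial>glued_measure M g S T)
      = (\<integral>\<^sup>+xx. glue_density M g xx * \<phi> (fst xx) \<partial>(uniform_measure M S \<Otimes>\<^sub>M uniform_measure M T))"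
    unfolding glued_measure_def
    by (simp add: nn_integral_density borel_measurable_pair_uniform_measure)
  also have "\<dots> = (\<integral>\<^sup>+x. \<integral>\<^sup>+x'. glue_density M g (x, x') * \<phi> x \<partial>uniform_measure M T \<partial>uniform_measure M S)"
    by (subst T.nn_integral_fst[symmetric]) (auto intro!: borel_measurable_pair_uniform_measure)
  also have "\<dots> = (\<integral>\<^sup>+x. (\<integral>\<^sup>+x'. glue_density M g (x, x') \<partial>uniform_measure M T) * \<phi> x \<partial>uniform_measure M S)"
    by (intro nn_integral_cong nn_integral_multc) auto
  also have "\<dots> = (\<integral>\<^sup>+x. \<phi> x \<partial>uniform_measure M S)"
    using nn_integral_glue_density_section[OF measurable_g events_S_T(2) prob_S_T_pos(2) indep_T]
    by (intro nn_integral_cong_AE AE_uniform_measureI) auto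
  finally show ?thesis .
qed

lemma nn_integral_glued_measure_snd:
  assumes [measurable]: "\<psi> \<in> borel_measurable M"
  shows "(\<integral>\<^sup>+xx. \<psi> (snd xx) \<partial>glued_measure M g S T) = (\<integral>\<^sup>+x'. \<psi> x' \<partial>uniform_measure M T)"
proof -
  have "(\<integral>\<^sup>+xx. \<psi> (snd xx) \<partial>glued_measure M g S T)
      = (\<integral>\<^sup>+xx. glue_density M g xx * \<psi> (snd xx) \<partial>(uniform_measure M S \<Otimes>\<^sub>M uniform_measure M T))"
    unfolding glued_measure_def
    by (simp add: nn_integral_density borel_measurable_pair_uniform_measure)
  also have "\<dots> = (\<integral>\<^sup>+x'. \<integral>\<^sup>+x. glue_density M g (x', x) * \<psi> x' \<partial>uniform_measure M S \<partial>uniform_measure M T)"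
    by (subst S_T.nn_integral_snd[symmetric])
       (auto intro!: borel_measurable_pair_uniform_measure simp: glue_density_commute)
  also have "\<dots> = (\<integral>\<^sup>+x'. (\<integral>\<^sup>+x. glue_density M g (x', x) \<partial>uniform_measure M S) * \<psi> x' \<partial>uniform_measure M T)"
    by (intro nn_integral_cong nn_integral_multc) auto
  also have "\<dots> = (\<integral>\<^sup>+x'. \<psi> x' \<partial>uniform_measure M T)"
    using nn_integral_glue_density_section[OF measurable_g events_S_T(1) prob_S_T_pos(1) indep_S]
    by (intro nn_integral_cong_AE AE_uniform_measureI) auto
  finally show ?thesis .
qed

lemma sets_glued_measure [measurable_cong]: "sets (glued_measure M g S T) = sets (M \<Otimes>\<^sub>M M)"
  by (simp add: glued_measure_def sets_pair_uniform_measure)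

lemma prob_space_glued_measure: "prob_space (glued_measure M g S T)"
proof
  have "emeasure (glued_measure M g S T) (space (glued_measure M g S T))
      = (\<integral>\<^sup>+xx. (\<lambda>_. 1) (fst xx) \<partial>glued_measure M g S T)"
    by simp
  also have "\<dots> = 1"
    using prob_S_T_pos by (subst nn_integral_glued_measure_fst) (auto simp: emeasure_eq_measure divide_ennreal)
  finally show "emeasure (glued_measure M g S T) (space (glued_measure M g S T)) = 1" .
qed

lemma AE_glued_measure: "AE xx in glued_measure M g S T. g (fst xx) = g (snd xx)"
  unfolding glued_measure_def
  by (subst AE_density) (auto intro: borel_measurable_pair_uniform_measure simp: glue_density_def split: if_splits)

lemma distr_glued_measure_fst: "distr (glued_measure M g S T) M fst = uniform_measure M S"
proof (rule measure_eqI)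
  fix B assume "B \<in> sets (distr (glued_measure M g S T) M fst)"
  then have [measurable]: "B \<in> events" by simp
  have "emeasure (distr (glued_measure M g S T) M fst) B
      = (\<integral>\<^sup>+x. indicator B x \<partial>distr (glued_measure M g S T) M fst)"
    by simp
  also have "\<dots> = (\<integral>\<^sup>+xx. indicator B (fst xx) \<partial>glued_measure M g S T)"
    by (rule nn_integral_distr) measurable
  also have "\<dots> = emeasure (uniform_measure M S) B"
    by (subst nn_integral_glued_measure_fst) simp_all
  finally show "emeasure (distr (glued_measure M g S T) M fst) B = emeasure (uniform_measure M S) B" .
qed simp

lemma distr_glued_measure_snd: "distr (glued_measure M g S T) M snd = uniform_measure M T"
proof (rule measure_eqI)
  fix B assume "B \<in> sets (distr (glued_measure M g S T) M snd)"
  then have [measurable]: "B \<in> events" by simp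
  have "emeasure (distr (glued_measure M g S T) M snd) B
      = (\<integral>\<^sup>+x. indicator B x \<partial>distr (glued_measure M g S T) M snd)"
    by simp
  also have "\<dots> = (\<integral>\<^sup>+xx. indicator B (snd xx) \<partial>glued_measure M g S T)"
    by (rule nn_integral_distr) measurable
  also have "\<dots> = emeasure (uniform_measure M T) B"
    by (subst nn_integral_glued_measure_snd) simp_all
  finally show "emeasure (distr (glued_measure M g S T) M snd) B = emeasure (uniform_measure M T) B" .
qed simp

lemma transport_cost_le_glued:
  assumes [measurable]: "Y \<in> borel_measurable M" "c \<in> borel_measurable M" "c' \<in> borel_measurable M"
    and cost_le: "\<And>x x'. x \<in> space M \<Longrightarrow> x' \<in> space M \<Longrightarrow> g x = g x' \<Longrightarrow>
      ennreal (\<bar>Y x - Y x'\<bar> powr p) \<le> c x + c' x'"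
  shows "transport_cost p (distr (uniform_measure M S) borel Y) (distr (uniform_measure M T) borel Y)
    \<le> (\<integral>\<^sup>+x. c x \<partial>uniform_measure M S) + (\<integral>\<^sup>+x'. c' x' \<partial>uniform_measure M T)"
proof -
  let ?\<rho> = "glued_measure M g S T"
  let ?\<pi> = "distr ?\<rho> borel (\<lambda>xx. (Y (fst xx), Y (snd xx)))"
  have measurable_pair: "(\<lambda>xx. (Y (fst xx), Y (snd xx))) \<in> measurable ?\<rho> borel"
    unfolding borel_prod[symmetric] by measurable
  have cost_measurable:
    "(\<lambda>z. ennreal (\<bar>fst z - snd z\<bar> powr p)) \<in> borel_measurable (borel :: (real \<times> real) measure)"
    unfolding borel_prod[symmetric] by measurable
  have "?\<pi> \<in> couplings (distr (uniform_measure M S) borel Y) (distr (uniform_measure M T) borel Y)"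
    using distr_pair_in_couplings[OF prob_space_glued_measure sets_glued_measure]
    by (simp add: distr_glued_measure_fst distr_glued_measure_snd)
  then have "transport_cost p (distr (uniform_measure M S) borel Y) (distr (uniform_measure M T) borel Y)
      \<le> (\<integral>\<^sup>+z. ennreal (\<bar>fst z - snd z\<bar> powr p) \<partial>?\<pi>)"
    unfolding transport_cost_def by (rule INF_lower)
  also have "\<dots> = (\<integral>\<^sup>+xx. ennreal (\<bar>Y (fst xx) - Y (snd xx)\<bar> powr p) \<partial>?\<rho>)"
    by (simp add: nn_integral_distr[OF measurable_pair] cost_measurable)
  also have "\<dots> \<le> (\<integral>\<^sup>+xx. c (fst xx) + c' (snd xx) \<partial>?\<rho>)"
    using AE_glued_measure
  proof (rule nn_integral_mono_AE[OF AE_mp])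
    show "AE xx in ?\<rho>. g (fst xx) = g (snd xx) \<longrightarrow>
        ennreal (\<bar>Y (fst xx) - Y (snd xx)\<bar> powr p) \<le> c (fst xx) + c' (snd xx)"
      by (intro AE_I2) (auto simp: space_pair_measure sets_eq_imp_space_eq[OF sets_glued_measure] cost_le)
  qed
  also have "\<dots> = (\<integral>\<^sup>+x. c x \<partial>uniform_measure M S) + (\<integral>\<^sup>+x'. c' x' \<partial>uniform_measure M T)"
    by (simp add: nn_integral_add nn_integral_glued_measure_fst nn_integral_glued_measure_snd)
  finally show ?thesis .
qed

end

section \<open>Transport cost between the conditional laws of Y\<close>

context prob_space
begin

lemma nn_integral_affine_uniform_measure:
  assumes [measurable]: "S \<in> events" "f \<in> borel_measurable M" and "prob S > 0"
  shows "(\<integral>\<^sup>+x. a * f x + b \<partial>uniform_measure M S) = a * (\<integral>\<^sup>+x. f x \<partial>uniform_measure M S) + b"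
  using \<open>prob S > 0\<close> by (simp add: nn_integral_add nn_integral_cmult emeasure_eq_measure divide_ennreal)

lemma transport_cost_le_cond_errors_approx:
  assumes [measurable]: "S \<in> events" "T \<in> events" "Y \<in> borel_measurable M" "Yh \<in> borel_measurable M"
    and pos: "prob S > 0" "prob T > 0"
    and indep_S: "\<And>B. B \<in> sets borel \<Longrightarrow>
      prob ({x\<in>space M. Yh x \<in> B} \<inter> S) = prob {x\<in>space M. Yh x \<in> B} * prob S"
    and indep_T: "\<And>B. B \<in> sets borel \<Longrightarrow>
      prob ({x\<in>space M. Yh x \<in> B} \<inter> T) = prob {x\<in>space M. Yh x \<in> B} * prob T"
    and t: "0 < t" "t < 1" and p: "1 \<le> p"
  shows "transport_cost p (distr (uniform_measure M S) borel Y) (distr (uniform_measure M T) borel Y)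
    \<le> ennreal ((1 - t) powr (1 - p) * 2 powr (p - 1))
        * ((\<integral>\<^sup>+x. ennreal (\<bar>Yh x - Y x\<bar> powr p) \<partial>uniform_measure M S)
          + (\<integral>\<^sup>+x. ennreal (\<bar>Yh x - Y x\<bar> powr p) \<partial>uniform_measure M T))
      + ennreal t"
proof -
  define L where "L = (1 - t) powr (1 - p) * 2 powr (p - 1)"
  define g where "g x = \<lfloor>Yh x / t\<rfloor>" for x
  define c where "c x = ennreal L * ennreal (\<bar>Yh x - Y x\<bar> powr p) + ennreal (t / 2)" for x
  have [measurable]: "g \<in> measurable M (count_space UNIV)" "c \<in> borel_measurable M"
    unfolding g_def c_def by measurable
  have level_set: "{x\<in>space M. g x = z} = {x\<in>space M. Yh x \<in> {y. \<lfloor>y / t\<rfloor> = z}}" for z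
    by (simp add: g_def)
  have level_set_borel: "{y. \<lfloor>y / t\<rfloor> = z} \<in> sets borel" for z
    by measurable
  have "prob ({x\<in>space M. g x = z} \<inter> S) = prob {x\<in>space M. g x = z} * prob S" for z
    unfolding level_set using level_set_borel by (rule indep_S)
  moreover have "prob ({x\<in>space M. g x = z} \<inter> T) = prob {x\<in>space M. g x = z} * prob T" for z
    unfolding level_set using level_set_borel by (rule indep_T)
  ultimately interpret gluing M g S T
    using pos by unfold_locales simp_all
  have "ennreal (\<bar>Y x - Y x'\<bar> powr p) \<le> c x + c x'" if "g x = g x'" for x x'
  proof -
    have "\<bar>Yh x - Yh x'\<bar> \<le> t"
      using that t by (intro abs_diff_le_of_floor_divide_eq) (simp_all add: g_def)
    then have "\<bar>Y x - Y x'\<bar> powr p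
        \<le> L * \<bar>Yh x - Y x\<bar> powr p + t / 2 + (L * \<bar>Yh x' - Y x'\<bar> powr p + t / 2)"
      using powr_dist_le_via_predictions[of "Yh x" "Yh x'" t p "Y x" "Y x'"] t p
      by (simp add: L_def algebra_simps)
    then show ?thesis
      using t by (simp add: c_def L_def ennreal_mult[symmetric] ennreal_plus[symmetric] del: ennreal_plus)
  qed
  then have "transport_cost p (distr (uniform_measure M S) borel Y) (distr (uniform_measure M T) borel Y)
      \<le> (\<integral>\<^sup>+x. c x \<partial>uniform_measure M S) + (\<integral>\<^sup>+x. c x \<partial>uniform_measure M T)"
    by (intro transport_cost_le_glued) simp_all
  also have "\<dots> = ennreal L * ((\<integral>\<^sup>+x. ennreal (\<bar>Yh x - Y x\<bar> powr p) \<partial>uniform_measure M S)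
          + (\<integral>\<^sup>+x. ennreal (\<bar>Yh x - Y x\<bar> powr p) \<partial>uniform_measure M T)) + ennreal t"
    using pos t unfolding c_def
    by (simp add: nn_integral_affine_uniform_measure distrib_left ennreal_plus[symmetric] del: ennreal_plus)
  finally show ?thesis unfolding L_def .
qed

lemma transport_cost_le_cond_errors:
  assumes [measurable]: "S \<in> events" "T \<in> events" "Y \<in> borel_measurable M" "Yh \<in> borel_measurable M"
    and "prob S > 0" "prob T > 0"
    and "\<And>B. B \<in> sets borel \<Longrightarrow>
      prob ({x\<in>space M. Yh x \<in> B} \<inter> S) = prob {x\<in>space M. Yh x \<in> B} * prob S"
    and "\<And>B. B \<in> sets borel \<Longrightarrow>
      prob ({x\<in>space M. Yh x \<in> B} \<inter> T) = prob {x\<in>space M. Yh x \<in> B} * prob T"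
    and "1 \<le> p"
  shows "transport_cost p (distr (uniform_measure M S) borel Y) (distr (uniform_measure M T) borel Y)
    \<le> ennreal (2 powr (p - 1))
        * ((\<integral>\<^sup>+x. ennreal (\<bar>Yh x - Y x\<bar> powr p) \<partial>uniform_measure M S)
          + (\<integral>\<^sup>+x. ennreal (\<bar>Yh x - Y x\<bar> powr p) \<partial>uniform_measure M T))"
    (is "?C \<le> ennreal (2 powr (p - 1)) * ?E")
proof -
  have "((\<lambda>t. (1 - t) powr (1 - p) * 2 powr (p - 1)) \<longlongrightarrow> (1 - 0) powr (1 - p) * 2 powr (p - 1)) (at_right 0)"
    by (intro tendsto_intros) auto
  then have "((\<lambda>t. ennreal ((1 - t) powr (1 - p) * 2 powr (p - 1)) * ?E + ennreal t)
      \<longlongrightarrow> ennreal (2 powr (p - 1)) * ?E + ennreal 0) (at_right 0)"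
    by (intro tendsto_intros tendsto_mult_ennreal tendsto_ennrealI) auto
  then have "((\<lambda>t. ennreal ((1 - t) powr (1 - p) * 2 powr (p - 1)) * ?E + ennreal t)
      \<longlongrightarrow> ennreal (2 powr (p - 1)) * ?E) (at_right 0)"
    by simp
  then show ?thesis
  proof (rule tendsto_lowerbound)
    show "\<forall>\<^sub>F t in at_right 0. ?C \<le> ennreal ((1 - t) powr (1 - p) * 2 powr (p - 1)) * ?E + ennreal t"
      using assms by (intro eventually_at_rightI[of 0 1] transport_cost_le_cond_errors_approx) auto
  qed simp
qed

lemma nn_integral_total_expectation:
  assumes [measurable]: "S \<in> events" "f \<in> borel_measurable M"
    and "T = space M - S" "prob S > 0" "prob T > 0"
  shows "(\<integral>\<^sup>+x. f x \<partial>M) = ennreal (prob S) * (\<integral>\<^sup>+x. f x \<partial>uniform_measure M S)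
    + ennreal (prob T) * (\<integral>\<^sup>+x. f x \<partial>uniform_measure M T)"
proof -
  have [measurable]: "T \<in> events" using assms by auto
  have "ennreal (prob R) * (\<integral>\<^sup>+x. f x \<partial>uniform_measure M R) = (\<integral>\<^sup>+x. f x * indicator R x \<partial>M)"
    if "R \<in> events" "prob R > 0" for R
    using that by (simp add: nn_integral_uniform_measure emeasure_eq_measure ennreal_times_divide
        mult.commute[of "ennreal _"] ennreal_mult_divide_eq)
  moreover have "(\<integral>\<^sup>+x. f x \<partial>M) = (\<integral>\<^sup>+x. f x * indicator S x \<partial>M) + (\<integral>\<^sup>+x. f x * indicator T x \<partial>M)"
    using \<open>T = space M - S\<close>
    by (subst nn_integral_add[symmetric]) (auto intro!: nn_integral_cong split: split_indicator)
  ultimately show ?thesis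
    using assms by simp
qed

end

theorem corollary2:
  fixes M :: "'a measure"
    and \<X> :: "(real ^ 'd) set"
    and X :: "'a \<Rightarrow> real ^ 'd"
    and A :: "'a \<Rightarrow> real"
    and Y :: "'a \<Rightarrow> real"
    and h :: "real ^ 'd \<Rightarrow> real"
    and p :: real
  assumes "prob_space M"
    and "X \<in> measurable M (restrict_space borel \<X>)"
    and "A \<in> borel_measurable M"
    and "\<And>\<omega>. \<omega> \<in> space M \<Longrightarrow> A \<omega> \<in> {0, 1}"
    and "measure M {\<omega>\<in>space M. A \<omega> = 0} > 0"
    and "measure M {\<omega>\<in>space M. A \<omega> = 1} > 0"
    and "Y \<in> borel_measurable M"
    and "\<And>\<omega>. \<omega> \<in> space M \<Longrightarrow> Y \<omega> \<in> {-1..1}"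
    and "h \<in> borel_measurable (restrict_space borel \<X>)"
    and "prob_space.indep_var M borel (\<lambda>\<omega>. h (X \<omega>)) borel A"
    and "p \<ge> 1"
  shows "lp_error p M (\<lambda>\<omega>. h (X \<omega>)) Y
           \<ge> ereal (H01 M A) * wasserstein p (cond_distr M A 0 Y) (cond_distr M A 1 Y)"
proof -
  interpret prob_space M by fact
  note [measurable] = assms(3,7)
  define S where "S a = {\<omega>\<in>space M. A \<omega> = a}" for a :: real
  define E where "E a = (\<integral>\<^sup>+\<omega>. ennreal (\<bar>h (X \<omega>) - Y \<omega>\<bar> powr p) \<partial>uniform_measure M (S a))" for a
  define H where "H = H01 M A"
  have [measurable]: "S a \<in> events" for a
    unfolding S_def by measurable
  have [measurable]: "(\<lambda>\<omega>. h (X \<omega>)) \<in> borel_measurable M"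
    using assms(2,9) by (rule measurable_compose)
  have indep: "prob ({\<omega>\<in>space M. h (X \<omega>) \<in> B} \<inter> S a) = prob {\<omega>\<in>space M. h (X \<omega>) \<in> B} * prob (S a)"
    if "B \<in> sets borel" for B a
    using prob_indep_random_variable[OF assms(10) that, of "{a}"] by (simp add: S_def Collect_conj_eq Int_ac)
  have S_1: "S 1 = space M - S 0"
    using assms(4) by (auto simp: S_def)
  have H: "0 < H" "2 * H \<le> 1" "H \<le> prob (S 0)" "H \<le> prob (S 1)"
    using assms(5,6) prob_compl[of "S 0"] unfolding S_1 H_def H01_def S_def[symmetric] by (auto simp: max_def)
  have "ennreal (H powr p) * transport_cost p (cond_distr M A 0 Y) (cond_distr M A 1 Y)
      \<le> ennreal (H powr p) * (ennreal (2 powr (p - 1)) * (E 0 + E 1))"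
    unfolding cond_distr_def S_def[symmetric] E_def using assms(5,6,11) indep
    by (intro mult_left_mono transport_cost_le_cond_errors) (simp_all add: S_def)
  also have "\<dots> \<le> ennreal H * (E 0 + E 1)"
    using H assms(11) by (simp add: mult.assoc[symmetric] ennreal_mult'[symmetric] mult_right_mono
        ennreal_leI two_powr_mult_powr_le mult.commute[of "H powr p"])
  also have "\<dots> \<le> ennreal (prob (S 0)) * E 0 + ennreal (prob (S 1)) * E 1"
    unfolding distrib_left using H by (intro add_mono mult_right_mono ennreal_leI) auto
  also have "\<dots> = (\<integral>\<^sup>+\<omega>. ennreal (\<bar>h (X \<omega>) - Y \<omega>\<bar> powr p) \<partial>M)"
    unfolding E_def using assms(5,6) S_1 by (intro nn_integral_total_expectation[symmetric]) (simp_all add: S_def)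
  finally show ?thesis
    unfolding lp_error_def wasserstein_eq_root_transport_cost H_def[symmetric]
    using H assms(11) by (simp add: root_enn_ennreal_powr_mult[symmetric] root_enn_mono)
qed

end
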